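(* Assume $p_0\in(0,1)$, $p_j\in(0,1)$ and $\tau_j=\frac{p_0}{p_0+2(1-p_0)p_j}$ for $j=1,\dots,k$. Then for every $\Theta\in\mathbb R^{nd}$, $$\mathbb E_\xi\|G(\Theta)-G(\hat\Theta)\|^2\le 2\mathcal L\,\big(F(\Theta)-F(\hat\Theta)\big),$$ where both oracles use the same realization of $\xi$.
   Context: Clients $1,\dots,n$ are partitioned into nonempty disjoint clusters $\mathcal I_1,\dots,\mathcal I_k$; $d\ge1$. Each $f_i:\mathbb R^d\to\mathbb R$ is differentiable, $\mu$-strongly convex and $L$-smooth ($0<\mu\le L$). Fix $\gamma_i>0$ and $\alpha_j\in[0,1]$, not all $\alpha_j=0$. For $\Theta=(\theta_1,\dots,\theta_n)$ define $\bar\theta_j=\frac{\sum_{i\in\mathcal I_j}\gamma_i\theta_i}{\sum_{i\in\mathcal I_j}\gamma_i}$, $\bar\theta=\frac{\sum_{j}\sum_{i\in\mathcal I_j}\alpha_j\gamma_i\theta_i}{\sum_{j}\sum_{i\in\mathcal I_j}\alpha_j\gamma_i}$ and $F(\Theta)=\sum_{j}\sum_{i\in\mathcal I_j}\big(f_i(\theta_i)+\frac{(1-\alpha_j)\gamma_i}{2}\|\theta_i-\bar\theta_j\|^2+\frac{\alpha_j\gamma_i}{2}\|\theta_i-\bar\theta\|^2\big)$; $\hat\Theta$ is its unique minimizer. Gradient oracle: $\xi=(\xi_0,\dots,\xi_k)$ independent Bernoulli with $\mathbb P(\xi_j=1)=p_j$; $G(\Theta)=(G_1,\dots,G_n)$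 with, for $i\in\mathcal I_j$: $G_i=\frac{\gamma_i\alpha_j}{p_0}(\theta_i-\bar\theta)+\frac{\gamma_i\tau_j(1-\alpha_j)}{p_0}(\theta_i-\bar\theta_j)$ if $\xi_0=1$; $G_i=\frac{\gamma_i(1-\tau_j)(1-\alpha_j)}{(1-p_0)p_j}(\theta_i-\bar\theta_j)$ if $\xi_0=0,\xi_j=1$; $G_i=\frac{1}{(1-p_0)(1-p_j)}\nabla f_i(\theta_i)$ if $\xi_0=\xi_j=0$. Define $$\mathcal L=\max\Big\{\frac{2}{p_0}\max_{j}\max_{i\in\mathcal I_j}\alpha_j\gamma_i,\ \max_{j}\frac{2(1-\alpha_j)\max_{i\in\mathcal I_j}\gamma_i}{p_0+2(1-p_0)p_j},\ \frac{L}{1-p_0}\max_{j}\frac{1}{1-p_j}\Big\}.$$ *)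

theory Defs
  imports "HOL-Analysis.Analysis" "HOL-Probability.Probability"
begin

definition strongly_convex :: "real \<Rightarrow> ('a::real_normed_vector \<Rightarrow> real) \<Rightarrow> bool" where
  "strongly_convex \<mu> f \<longleftrightarrow> (\<forall>x y t. 0 \<le> t \<and> t \<le> 1 \<longrightarrow>
     f (t *\<^sub>R x + (1 - t) *\<^sub>R y) \<le> t * f x + (1 - t) * f y - \<mu> / 2 * t * (1 - t) * (norm (x - y))\<^sup>2)"

definition L_smooth :: "real \<Rightarrow> ('a::real_normed_vector \<Rightarrow> 'a) \<Rightarrow> bool" where
  "L_smooth L g \<longleftrightarrow> (\<forall>x y. norm (g x - g y) \<le> L * norm (x - y))"

definition clbar :: "(nat \<Rightarrow> real) \<Rightarrow> nat set \<Rightarrow> (nat \<Rightarrow> 'a::real_vector) \<Rightarrow> 'a" where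
  "clbar \<gamma> S \<Theta> = (1 / (\<Sum>i\<in>S. \<gamma> i)) *\<^sub>R (\<Sum>i\<in>S. \<gamma> i *\<^sub>R \<Theta> i)"

definition glbar :: "nat \<Rightarrow> (nat \<Rightarrow> nat set) \<Rightarrow> (nat \<Rightarrow> real) \<Rightarrow> (nat \<Rightarrow> real)
    \<Rightarrow> (nat \<Rightarrow> 'a::real_vector) \<Rightarrow> 'a" where
  "glbar k I \<alpha> \<gamma> \<Theta> = (1 / (\<Sum>j\<in>{1..k}. \<Sum>i\<in>I j. \<alpha> j * \<gamma> i)) *\<^sub>R
      (\<Sum>j\<in>{1..k}. \<Sum>i\<in>I j. (\<alpha> j * \<gamma> i) *\<^sub>R \<Theta> i)"

definition Fobj :: "nat \<Rightarrow> (nat \<Rightarrow> nat set) \<Rightarrow> (nat \<Rightarrow> real) \<Rightarrow> (nat \<Rightarrow> real)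
    \<Rightarrow> (nat \<Rightarrow> 'a::real_normed_vector \<Rightarrow> real) \<Rightarrow> (nat \<Rightarrow> 'a) \<Rightarrow> real" where
  "Fobj k I \<alpha> \<gamma> f \<Theta> = (\<Sum>j\<in>{1..k}. \<Sum>i\<in>I j.
      f i (\<Theta> i) + (1 - \<alpha> j) * \<gamma> i / 2 * (norm (\<Theta> i - clbar \<gamma> (I j) \<Theta>))\<^sup>2
      + \<alpha> j * \<gamma> i / 2 * (norm (\<Theta> i - glbar k I \<alpha> \<gamma> \<Theta>))\<^sup>2)"

(* component G_i of the stochastic oracle, for client i in cluster j, given the
   realization \<xi> = (\<xi>_0,...,\<xi>_k);  p 0 = p_0, p j = p_j, g i = gradient of f_i *)
definition Gorc :: "nat \<Rightarrow> (nat \<Rightarrow> nat set) \<Rightarrow> (nat \<Rightarrow> real) \<Rightarrow> (nat \<Rightarrow> real)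
    \<Rightarrow> (nat \<Rightarrow> real) \<Rightarrow> (nat \<Rightarrow> real) \<Rightarrow> (nat \<Rightarrow> 'a::real_normed_vector \<Rightarrow> 'a)
    \<Rightarrow> (nat \<Rightarrow> bool) \<Rightarrow> (nat \<Rightarrow> 'a) \<Rightarrow> nat \<Rightarrow> nat \<Rightarrow> 'a" where
  "Gorc k I \<alpha> \<gamma> \<tau> p g \<xi> \<Theta> j i =
     (if \<xi> 0 then
        (\<gamma> i * \<alpha> j / p 0) *\<^sub>R (\<Theta> i - glbar k I \<alpha> \<gamma> \<Theta>)
        + (\<gamma> i * \<tau> j * (1 - \<alpha> j) / p 0) *\<^sub>R (\<Theta> i - clbar \<gamma> (I j) \<Theta>)
      else if \<xi> j then
        (\<gamma> i * (1 - \<tau> j) * (1 - \<alpha> j) / ((1 - p 0) * p j)) *\<^sub>R (\<Theta> i - clbar \<gamma> (I j) \<Theta>)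
      else (1 / ((1 - p 0) * (1 - p j))) *\<^sub>R g i (\<Theta> i))"

definition calL :: "nat \<Rightarrow> (nat \<Rightarrow> nat set) \<Rightarrow> (nat \<Rightarrow> real) \<Rightarrow> (nat \<Rightarrow> real)
    \<Rightarrow> (nat \<Rightarrow> real) \<Rightarrow> real \<Rightarrow> real" where
  "calL k I \<alpha> \<gamma> p L = max (max
      (2 / p 0 * Max ((\<lambda>j. Max ((\<lambda>i. \<alpha> j * \<gamma> i) ` I j)) ` {1..k}))
      (Max ((\<lambda>j. 2 * (1 - \<alpha> j) * Max (\<gamma> ` I j) / (p 0 + 2 * (1 - p 0) * p j)) ` {1..k})))
      (L / (1 - p 0) * Max ((\<lambda>j. 1 / (1 - p j)) ` {1..k}))"

definition xi_pmf :: "nat \<Rightarrow> (nat \<Rightarrow> real) \<Rightarrow> (nat \<Rightarrow> bool) pmf" where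
  "xi_pmf k p = Pi_pmf {0..k} False (\<lambda>j. bernoulli_pmf (p j))"

end

theory Submission
  imports Defs
begin

text \<open>Write \<open>\<Delta> = \<Theta> - \<Theta>hat\<close>. Because \<open>\<Theta>hat\<close> minimises \<open>F\<close>, the directional derivative of \<open>F\<close> at
  \<open>\<Theta>hat\<close> along \<open>\<Delta>\<close> vanishes, so \<open>F \<Theta> - F \<Theta>hat\<close> is the sum over clients of the Bregman
  divergence of \<open>f\<^sub>i\<close> plus the two penalty quadratics evaluated at \<open>\<Delta>\<close>. On the other side,
  the \<open>i\<close>-th component of \<open>G \<Theta> - G \<Theta>hat\<close> depends on \<open>\<xi>\<close> only through \<open>(\<xi>\<^sub>0, \<xi>\<^sub>j)\<close>, so its
  expected square is an explicit mixture of three terms. The averaging terms are bounded by the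
  penalty quadratics, the choice of \<open>\<tau>\<^sub>j\<close> making the two contributions of the cluster average
  combine exactly, and the gradient term by the Bregman divergence, by co-coercivity of the
  gradient of a convex \<open>L\<close>-smooth function.\<close>

lemma finite_set_pmf_xi_pmf: "finite (set_pmf (xi_pmf k p))"
proof -
  have "set_pmf (xi_pmf k p) \<subseteq> {\<xi>. \<forall>j. j \<notin> {0..k} \<longrightarrow> \<xi> j = False}"
    unfolding xi_pmf_def by (rule set_Pi_pmf_subset) simp
  also have "\<dots> \<subseteq> (\<lambda>S j. j \<in> S) ` Pow {0..k}"
  proof
    fix \<xi> :: "nat \<Rightarrow> bool" assume "\<xi> \<in> {\<xi>. \<forall>j. j \<notin> {0..k} \<longrightarrow> \<xi> j = False}"
    then have "\<xi> = (\<lambda>j. j \<in> {j\<in>{0..k}. \<xi> j})" by auto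
    then show "\<xi> \<in> (\<lambda>S j. j \<in> S) ` Pow {0..k}" by blast
  qed
  finally show ?thesis by (rule finite_subset) simp
qed

lemma map_pmf_xi_pmf_pair:
  assumes "j \<in> {1..k}"
  shows "map_pmf (\<lambda>\<xi>. (\<xi> 0, \<xi> j)) (xi_pmf k p) = pair_pmf (bernoulli_pmf (p 0)) (bernoulli_pmf (p j))"
proof -
  let ?rest = "Pi_pmf {1..k} False (\<lambda>j. bernoulli_pmf (p j))"
  have indices: "{0..k} = insert 0 {1..k}"
    by auto
  have "xi_pmf k p = map_pmf (\<lambda>(y, \<xi>). \<xi>(0 := y)) (pair_pmf (bernoulli_pmf (p 0)) ?rest)"
    unfolding xi_pmf_def indices by (subst Pi_pmf_insert) simp_all
  then have "map_pmf (\<lambda>\<xi>. (\<xi> 0, \<xi> j)) (xi_pmf k p)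
      = map_pmf (\<lambda>(a, b). (id a, (\<lambda>\<xi>. \<xi> j) b)) (pair_pmf (bernoulli_pmf (p 0)) ?rest)"
    using assms by (simp add: pmf.map_comp o_def case_prod_unfold)
  also have "\<dots> = pair_pmf (map_pmf id (bernoulli_pmf (p 0))) (map_pmf (\<lambda>\<xi>. \<xi> j) ?rest)"
    by (rule map_pair)
  also have "\<dots> = pair_pmf (bernoulli_pmf (p 0)) (bernoulli_pmf (p j))"
    using assms by (simp add: Pi_pmf_component)
  finally show ?thesis .
qed

lemma expectation_xi_pmf_pair:
  fixes h :: "bool \<Rightarrow> bool \<Rightarrow> real"
  assumes "j \<in> {1..k}" "0 \<le> p 0" "p 0 \<le> 1" "0 \<le> p j" "p j \<le> 1"
  shows "measure_pmf.expectation (xi_pmf k p) (\<lambda>\<xi>. h (\<xi> 0) (\<xi> j)) =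
     p 0 * (p j * h True True + (1 - p j) * h True False)
     + (1 - p 0) * (p j * h False True + (1 - p j) * h False False)"
proof -
  let ?P = "pair_pmf (bernoulli_pmf (p 0)) (bernoulli_pmf (p j))"
  have pairs: "(UNIV :: (bool \<times> bool) set) = {(True, True), (True, False), (False, True), (False, False)}"
    by auto
  have "measure_pmf.expectation (xi_pmf k p) (\<lambda>\<xi>. h (\<xi> 0) (\<xi> j))
      = measure_pmf.expectation (map_pmf (\<lambda>\<xi>. (\<xi> 0, \<xi> j)) (xi_pmf k p)) (case_prod h)"
    by simp
  also have "\<dots> = (\<Sum>a\<in>UNIV. pmf ?P a *\<^sub>R case_prod h a)"
    unfolding map_pmf_xi_pmf_pair[OF assms(1)] by (rule integral_measure_pmf) auto
  also have "\<dots> = p 0 * (p j * h True True + (1 - p j) * h True False)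
      + (1 - p 0) * (p j * h False True + (1 - p j) * h False False)"
    unfolding pairs using assms by (simp add: pmf_pair algebra_simps)
  finally show ?thesis .
qed

lemma has_real_derivative_along_line:
  fixes f :: "'a::real_inner \<Rightarrow> real"
  assumes "\<And>x. (f has_derivative (\<lambda>h. g x \<bullet> h)) (at x)"
  shows "((\<lambda>t. f (x + t *\<^sub>R d)) has_real_derivative (g (x + t *\<^sub>R d) \<bullet> d)) (at t within S)"
proof -
  have "((\<lambda>t. x + t *\<^sub>R d) has_derivative (\<lambda>s. s *\<^sub>R d)) (at t within S)"
    by (auto intro!: derivative_eq_intros)
  from has_derivative_compose[OF this has_derivative_at_withinI[OF assms]]
  show ?thesis
    by (simp add: o_def has_field_derivative_def mult_commute_abs)
qed

lemma L_smooth_descent: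
  fixes f :: "'a::real_inner \<Rightarrow> real"
  assumes deriv: "\<And>x. (f has_derivative (\<lambda>h. g x \<bullet> h)) (at x)" and smooth: "L_smooth L g"
  shows "f y \<le> f x + g x \<bullet> (y - x) + L / 2 * (norm (y - x))\<^sup>2"
proof -
  define d where "d = y - x"
  define h where "h t = f (x + t *\<^sub>R d) - t * (g x \<bullet> d) - L / 2 * t\<^sup>2 * (norm d)\<^sup>2" for t
  have "h 1 \<le> h 0"
  proof (rule DERIV_nonpos_imp_nonincreasing[of 0 1 h])
    fix t :: real assume t: "0 \<le> t" "t \<le> 1"
    have h': "(h has_real_derivative (g (x + t *\<^sub>R d) - g x) \<bullet> d - L * t * (norm d)\<^sup>2) (at t)"
      unfolding h_def inner_diff_left
      by (auto intro!: derivative_eq_intros has_real_derivative_along_line[OF deriv])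
    have "(g (x + t *\<^sub>R d) - g x) \<bullet> d \<le> norm (g (x + t *\<^sub>R d) - g x) * norm d"
      by (rule norm_cauchy_schwarz)
    also have "\<dots> \<le> L * norm (t *\<^sub>R d) * norm d"
      using smooth unfolding L_smooth_def by (metis add_diff_cancel_left' mult_right_mono norm_ge_zero)
    also have "\<dots> = L * t * (norm d)\<^sup>2"
      using t by (simp add: power2_eq_square)
    finally show "\<exists>y. (h has_real_derivative y) (at t) \<and> y \<le> 0"
      using h' by force
  qed simp
  then show ?thesis
    unfolding h_def d_def by simp
qed

lemma strongly_convex_imp_convex_on:
  assumes "strongly_convex \<mu> f" "0 \<le> \<mu>"
  shows "convex_on UNIV f"
proof (rule convex_onI)
  fix t :: real and x y assume t: "0 < t" "t < 1"
  have "f (s *\<^sub>R x + (1 - s) *\<^sub>R y)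
      \<le> s * f x + (1 - s) * f y - \<mu> / 2 * s * (1 - s) * (norm (x - y))\<^sup>2" if "0 \<le> s" "s \<le> 1" for s
    using assms(1) that unfolding strongly_convex_def by blast
  from this[of "1 - t"] t
  have "f ((1 - t) *\<^sub>R x + t *\<^sub>R y) \<le> (1 - t) * f x + t * f y - \<mu> / 2 * (1 - t) * t * (norm (x - y))\<^sup>2"
    by simp
  moreover have "0 \<le> \<mu> / 2 * (1 - t) * t * (norm (x - y))\<^sup>2"
    using assms(2) t by simp
  ultimately show "f ((1 - t) *\<^sub>R x + t *\<^sub>R y) \<le> (1 - t) * f x + t * f y"
    by simp
qed simp

lemma convex_on_gradient_inequality:
  fixes f :: "'a::real_inner \<Rightarrow> real"
  assumes deriv: "\<And>x. (f has_derivative (\<lambda>h. g x \<bullet> h)) (at x)" and convex: "convex_on UNIV f"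
  shows "f x + g x \<bullet> (y - x) \<le> f y"
proof -
  define q where "q t = f (x + t *\<^sub>R (y - x))" for t
  have "convex_on UNIV q"
  proof (rule convex_onI)
    fix t s1 s2 :: real assume "0 < t" "t < 1"
    have "x + ((1 - t) * s1 + t * s2) *\<^sub>R (y - x)
        = (1 - t) *\<^sub>R (x + s1 *\<^sub>R (y - x)) + t *\<^sub>R (x + s2 *\<^sub>R (y - x))"
      by (simp add: algebra_simps)
    then show "q ((1 - t) *\<^sub>R s1 + t *\<^sub>R s2) \<le> (1 - t) * q s1 + t * q s2"
      unfolding q_def using \<open>0 < t\<close> \<open>t < 1\<close> by (simp add: convex_onD[OF convex])
  qed simp
  moreover have "(q has_real_derivative (g x \<bullet> (y - x))) (at 0 within UNIV)"
    unfolding q_def using has_real_derivative_along_line[OF deriv, of x "y - x" 0] by simp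
  ultimately have "q 1 - q 0 \<ge> g x \<bullet> (y - x) * (1 - 0)"
    by (intro convex_on_imp_above_tangent) auto
  then show ?thesis
    unfolding q_def by simp
qed

text \<open>Co-coercivity: apply the gradient inequality at x and the descent lemma at y to the point
  z = y - (g y - g x) / L.\<close>

lemma convex_L_smooth_gradient_inequality:
  fixes f :: "'a::real_inner \<Rightarrow> real"
  assumes deriv: "\<And>x. (f has_derivative (\<lambda>h. g x \<bullet> h)) (at x)"
    and convex: "convex_on UNIV f" and smooth: "L_smooth L g" and L: "0 < L"
  shows "f x + g x \<bullet> (y - x) + (norm (g y - g x))\<^sup>2 / (2 * L) \<le> f y"
proof -
  define w where "w = g y - g x"
  define z where "z = y - (1 / L) *\<^sub>R w"
  have "f x + g x \<bullet> (z - x) \<le> f z"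
    by (rule convex_on_gradient_inequality[OF deriv convex])
  moreover have "f z \<le> f y + g y \<bullet> (z - y) + L / 2 * (norm (z - y))\<^sup>2"
    by (rule L_smooth_descent[OF deriv smooth])
  moreover have "g x \<bullet> (z - x) = g x \<bullet> (y - x) - (g x \<bullet> w) / L"
    unfolding z_def by (simp add: inner_diff_right)
  moreover have "g y \<bullet> (z - y) = - (g y \<bullet> w) / L"
    unfolding z_def by (simp add: inner_diff_right)
  moreover have "L / 2 * (norm (z - y))\<^sup>2 = (norm w)\<^sup>2 / (2 * L)"
    unfolding z_def using L by (simp add: power_divide power2_eq_square)
  moreover have "g y \<bullet> w - g x \<bullet> w = (norm w)\<^sup>2"
    unfolding w_def by (simp add: inner_diff_left power2_norm_eq_inner)
  ultimately show ?thesis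
    unfolding w_def[symmetric] using L by (simp add: field_simps)
qed

lemma clbar_add_scaleR: "clbar \<gamma> S (\<lambda>i. a i + t *\<^sub>R b i) = clbar \<gamma> S a + t *\<^sub>R clbar \<gamma> S b"
  unfolding clbar_def
  by (simp add: scaleR_add_right sum.distrib scaleR_sum_right mult.commute)

lemma clbar_diff: "clbar \<gamma> S (\<lambda>i. a i - b i) = clbar \<gamma> S a - clbar \<gamma> S b"
  unfolding clbar_def by (simp add: sum_subtractf scaleR_diff_right)

lemma glbar_add_scaleR:
  "glbar k I \<alpha> \<gamma> (\<lambda>i. a i + t *\<^sub>R b i) = glbar k I \<alpha> \<gamma> a + t *\<^sub>R glbar k I \<alpha> \<gamma> b"
  unfolding glbar_def
  by (simp add: scaleR_add_right sum.distrib scaleR_sum_right mult.commute mult.left_commute)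

lemma glbar_diff: "glbar k I \<alpha> \<gamma> (\<lambda>i. a i - b i) = glbar k I \<alpha> \<gamma> a - glbar k I \<alpha> \<gamma> b"
  unfolding glbar_def by (simp add: sum_subtractf scaleR_diff_right)

lemma power2_norm_add_scaleR:
  fixes u v :: "'a::real_inner"
  shows "(norm (u + t *\<^sub>R v))\<^sup>2 = (norm u)\<^sup>2 + 2 * t * (u \<bullet> v) + t\<^sup>2 * (norm v)\<^sup>2"
  unfolding power2_norm_eq_inner
  by (simp add: inner_add_left inner_add_right inner_commute algebra_simps power2_eq_square)

lemma Fobj_along_line:
  fixes f :: "nat \<Rightarrow> 'a::real_inner \<Rightarrow> real"
  shows "Fobj k I \<alpha> \<gamma> f (\<lambda>i. \<Theta> i + t *\<^sub>R \<Delta> i) = (\<Sum>j\<in>{1..k}. \<Sum>i\<in>I j. f i (\<Theta> i + t *\<^sub>R \<Delta> i)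
      + (1 - \<alpha> j) * \<gamma> i / 2 * ((norm (\<Theta> i - clbar \<gamma> (I j) \<Theta>))\<^sup>2
          + 2 * t * ((\<Theta> i - clbar \<gamma> (I j) \<Theta>) \<bullet> (\<Delta> i - clbar \<gamma> (I j) \<Delta>))
          + t\<^sup>2 * (norm (\<Delta> i - clbar \<gamma> (I j) \<Delta>))\<^sup>2)
      + \<alpha> j * \<gamma> i / 2 * ((norm (\<Theta> i - glbar k I \<alpha> \<gamma> \<Theta>))\<^sup>2
          + 2 * t * ((\<Theta> i - glbar k I \<alpha> \<gamma> \<Theta>) \<bullet> (\<Delta> i - glbar k I \<alpha> \<gamma> \<Delta>))
          + t\<^sup>2 * (norm (\<Delta> i - glbar k I \<alpha> \<gamma> \<Delta>))\<^sup>2))"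
proof -
  have regroup: "\<Theta> i + t *\<^sub>R \<Delta> i - (c + t *\<^sub>R c') = (\<Theta> i - c) + t *\<^sub>R (\<Delta> i - c')"
    for i and c c' :: 'a
    by (simp add: algebra_simps)
  show ?thesis
    unfolding Fobj_def clbar_add_scaleR glbar_add_scaleR regroup power2_norm_add_scaleR ..
qed

lemma Fobj_minimizer_stationary:
  fixes f :: "nat \<Rightarrow> 'a::real_inner \<Rightarrow> real"
  assumes grad: "\<forall>j\<in>{1..k}. \<forall>i\<in>I j. \<forall>x. (f i has_derivative (\<lambda>h. g i x \<bullet> h)) (at x)"
    and minimizer: "\<forall>\<Theta>'. Fobj k I \<alpha> \<gamma> f \<Theta>hat \<le> Fobj k I \<alpha> \<gamma> f \<Theta>'"
  shows "(\<Sum>j\<in>{1..k}. \<Sum>i\<in>I j. g i (\<Theta>hat i) \<bullet> \<Delta> i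
      + (1 - \<alpha> j) * \<gamma> i * ((\<Theta>hat i - clbar \<gamma> (I j) \<Theta>hat) \<bullet> (\<Delta> i - clbar \<gamma> (I j) \<Delta>))
      + \<alpha> j * \<gamma> i * ((\<Theta>hat i - glbar k I \<alpha> \<gamma> \<Theta>hat) \<bullet> (\<Delta> i - glbar k I \<alpha> \<gamma> \<Delta>))) = 0"
    (is "?S = 0")
proof -
  let ?F = "\<lambda>t. Fobj k I \<alpha> \<gamma> f (\<lambda>i. \<Theta>hat i + t *\<^sub>R \<Delta> i)"
  have "((\<lambda>t. f i (\<Theta>hat i + t *\<^sub>R \<Delta> i)) has_real_derivative g i (\<Theta>hat i) \<bullet> \<Delta> i) (at 0)"
    if "j \<in> {1..k}" "i \<in> I j" for i j
    using has_real_derivative_along_line[of "f i" "g i" "\<Theta>hat i" "\<Delta> i" 0 UNIV] grad that by simp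
  then have "(?F has_real_derivative ?S) (at 0)"
    unfolding Fobj_along_line by (auto intro!: derivative_eq_intros sum.cong)
  moreover have "?F 0 \<le> ?F t" for t
    using minimizer by simp
  ultimately show ?thesis
    by (intro DERIV_local_min[where f = ?F and x = 0 and d = 1]) simp_all
qed

lemma Fobj_diff_minimizer:
  fixes f :: "nat \<Rightarrow> 'a::real_inner \<Rightarrow> real" and \<Theta> \<Theta>hat :: "nat \<Rightarrow> 'a"
  assumes grad: "\<forall>j\<in>{1..k}. \<forall>i\<in>I j. \<forall>x. (f i has_derivative (\<lambda>h. g i x \<bullet> h)) (at x)"
    and minimizer: "\<forall>\<Theta>'. Fobj k I \<alpha> \<gamma> f \<Theta>hat \<le> Fobj k I \<alpha> \<gamma> f \<Theta>'"
  defines "\<Delta> \<equiv> \<lambda>i. \<Theta> i - \<Theta>hat i"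
  shows "Fobj k I \<alpha> \<gamma> f \<Theta> - Fobj k I \<alpha> \<gamma> f \<Theta>hat = (\<Sum>j\<in>{1..k}. \<Sum>i\<in>I j.
      f i (\<Theta> i) - f i (\<Theta>hat i) - g i (\<Theta>hat i) \<bullet> \<Delta> i
      + (1 - \<alpha> j) * \<gamma> i / 2 * (norm (\<Delta> i - clbar \<gamma> (I j) \<Delta>))\<^sup>2
      + \<alpha> j * \<gamma> i / 2 * (norm (\<Delta> i - glbar k I \<alpha> \<gamma> \<Delta>))\<^sup>2)"
    (is "_ = (\<Sum>j\<in>{1..k}. \<Sum>i\<in>I j. ?e j i)")
proof -
  let ?F = "\<lambda>t. Fobj k I \<alpha> \<gamma> f (\<lambda>i. \<Theta>hat i + t *\<^sub>R \<Delta> i)"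
  let ?s = "\<lambda>j i. g i (\<Theta>hat i) \<bullet> \<Delta> i
      + (1 - \<alpha> j) * \<gamma> i * ((\<Theta>hat i - clbar \<gamma> (I j) \<Theta>hat) \<bullet> (\<Delta> i - clbar \<gamma> (I j) \<Delta>))
      + \<alpha> j * \<gamma> i * ((\<Theta>hat i - glbar k I \<alpha> \<gamma> \<Theta>hat) \<bullet> (\<Delta> i - glbar k I \<alpha> \<gamma> \<Delta>))"
  have \<Theta>: "\<Theta>hat i + \<Delta> i = \<Theta> i" for i
    unfolding \<Delta>_def by simp
  have "Fobj k I \<alpha> \<gamma> f \<Theta> - Fobj k I \<alpha> \<gamma> f \<Theta>hat = ?F 1 - ?F 0"
    by (simp add: \<Theta>)
  also have "\<dots> = (\<Sum>j\<in>{1..k}. \<Sum>i\<in>I j. ?e j i + ?s j i)"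
    unfolding Fobj_along_line sum_subtractf[symmetric]
    by (intro sum.cong refl)
      (simp only: scaleR_one scaleR_zero_left add_0_right \<Theta>, simp add: algebra_simps diff_divide_distrib del: inner_add inner_diff)
  also have "\<dots> = (\<Sum>j\<in>{1..k}. \<Sum>i\<in>I j. ?e j i) + (\<Sum>j\<in>{1..k}. \<Sum>i\<in>I j. ?s j i)"
    by (simp only: sum.distrib)
  also have "(\<Sum>j\<in>{1..k}. \<Sum>i\<in>I j. ?s j i) = 0"
    by (rule Fobj_minimizer_stationary[OF grad minimizer])
  finally show ?thesis
    by simp
qed

lemma power2_norm_add_le:
  fixes x y :: "'a::real_normed_vector"
  shows "(norm (x + y))\<^sup>2 \<le> 2 * (norm x)\<^sup>2 + 2 * (norm y)\<^sup>2"
proof -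
  have "(norm (x + y))\<^sup>2 \<le> (norm x + norm y)\<^sup>2"
    by (simp add: norm_triangle_ineq power_mono)
  also have "\<dots> \<le> 2 * (norm x)\<^sup>2 + 2 * (norm y)\<^sup>2"
    using sum_squares_ge_zero[of "norm x - norm y" 0] by (simp add: power2_eq_square algebra_simps)
  finally show ?thesis .
qed

lemma expectation_Gorc_diff:
  fixes g :: "nat \<Rightarrow> 'a::real_normed_vector \<Rightarrow> 'a" and \<Theta> \<Theta>' :: "nat \<Rightarrow> 'a"
  assumes "j \<in> {1..k}" "0 \<le> p 0" "p 0 \<le> 1" "0 \<le> p j" "p j \<le> 1"
  defines "\<Delta> \<equiv> \<lambda>i. \<Theta> i - \<Theta>' i"
  shows "measure_pmf.expectation (xi_pmf k p)
      (\<lambda>\<xi>. (norm (Gorc k I \<alpha> \<gamma> \<tau> p g \<xi> \<Theta> j i - Gorc k I \<alpha> \<gamma> \<tau> p g \<xi> \<Theta>' j i))\<^sup>2)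
    = p 0 * (norm ((\<gamma> i * \<alpha> j / p 0) *\<^sub>R (\<Delta> i - glbar k I \<alpha> \<gamma> \<Delta>)
                   + (\<gamma> i * \<tau> j * (1 - \<alpha> j) / p 0) *\<^sub>R (\<Delta> i - clbar \<gamma> (I j) \<Delta>)))\<^sup>2
      + (1 - p 0) * (p j * (\<gamma> i * (1 - \<tau> j) * (1 - \<alpha> j) / ((1 - p 0) * p j))\<^sup>2
                        * (norm (\<Delta> i - clbar \<gamma> (I j) \<Delta>))\<^sup>2
                   + (1 - p j) * (1 / ((1 - p 0) * (1 - p j)))\<^sup>2 * (norm (g i (\<Theta> i) - g i (\<Theta>' i)))\<^sup>2)"
proof -
  let ?a = "\<Delta> i - glbar k I \<alpha> \<gamma> \<Delta>" and ?b = "\<Delta> i - clbar \<gamma> (I j) \<Delta>"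
  let ?h = "\<lambda>a b. (norm (if a then (\<gamma> i * \<alpha> j / p 0) *\<^sub>R ?a + (\<gamma> i * \<tau> j * (1 - \<alpha> j) / p 0) *\<^sub>R ?b
      else if b then (\<gamma> i * (1 - \<tau> j) * (1 - \<alpha> j) / ((1 - p 0) * p j)) *\<^sub>R ?b
      else (1 / ((1 - p 0) * (1 - p j))) *\<^sub>R (g i (\<Theta> i) - g i (\<Theta>' i))))\<^sup>2"
  have "(norm (Gorc k I \<alpha> \<gamma> \<tau> p g \<xi> \<Theta> j i - Gorc k I \<alpha> \<gamma> \<tau> p g \<xi> \<Theta>' j i))\<^sup>2 = ?h (\<xi> 0) (\<xi> j)" for \<xi>
    unfolding Gorc_def \<Delta>_def glbar_diff clbar_diff by (simp add: algebra_simps)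
  then have "measure_pmf.expectation (xi_pmf k p)
      (\<lambda>\<xi>. (norm (Gorc k I \<alpha> \<gamma> \<tau> p g \<xi> \<Theta> j i - Gorc k I \<alpha> \<gamma> \<tau> p g \<xi> \<Theta>' j i))\<^sup>2)
      = measure_pmf.expectation (xi_pmf k p) (\<lambda>\<xi>. ?h (\<xi> 0) (\<xi> j))"
    by simp
  also have "\<dots> = p 0 * (p j * ?h True True + (1 - p j) * ?h True False)
      + (1 - p 0) * (p j * ?h False True + (1 - p j) * ?h False False)"
    by (rule expectation_xi_pmf_pair[OF assms(1-5)])
  moreover have "p j * x + (1 - p j) * x = x" for x :: real
    by (simp add: algebra_simps)
  ultimately show ?thesis
    by (simp add: power_mult_distrib power_divide power2_abs)
qed

text \<open>The two ways the cluster average enters the oracle (with weight \<open>\<tau>\<^sub>j\<close> when \<open>\<xi>\<^sub>0 = 1\<close>,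
  with weight \<open>1 - \<tau>\<^sub>j\<close> when \<open>\<xi>\<^sub>0 = 0, \<xi>\<^sub>j = 1\<close>) combine into exactly the constant appearing in
  \<open>calL\<close>; this is what dictates the choice of \<open>\<tau>\<^sub>j\<close>.\<close>

lemma cluster_average_weights:
  fixes p0 pj a :: real
  assumes "0 < p0" "p0 < 1" "0 < pj"
  defines "\<tau> \<equiv> p0 / (p0 + 2 * (1 - p0) * pj)"
  shows "p0 * (2 * (a * \<tau> / p0)\<^sup>2) + (1 - p0) * (pj * (a * (1 - \<tau>) / ((1 - p0) * pj))\<^sup>2)
    = 2 * a\<^sup>2 / (p0 + 2 * (1 - p0) * pj)"
proof -
  define q where "q = (1 - p0) * pj"
  define D where "D = p0 + 2 * q"
  have q: "0 < q"
    using assms unfolding q_def by simp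
  have D: "0 < D"
    unfolding D_def using assms(1) q by simp
  have \<tau>: "\<tau> = p0 / D" and \<tau>': "1 - \<tau> = 2 * q / D"
    unfolding \<tau>_def D_def q_def using D[unfolded D_def q_def] by (simp_all add: field_simps)
  have "p0 * (2 * (a * \<tau> / p0)\<^sup>2) = 2 * a\<^sup>2 * p0 / D\<^sup>2"
    unfolding \<tau> using assms(1) D by (simp add: power2_eq_square field_simps)
  moreover have "(1 - p0) * (pj * (a * (1 - \<tau>) / ((1 - p0) * pj))\<^sup>2) = 2 * a\<^sup>2 * (2 * q) / D\<^sup>2"
    unfolding \<tau>' mult.assoc[symmetric] q_def[symmetric] using q D by (simp add: power2_eq_square field_simps)
  moreover have "2 * a\<^sup>2 * p0 / D\<^sup>2 + 2 * a\<^sup>2 * (2 * q) / D\<^sup>2 = 2 * a\<^sup>2 / D"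
    using D unfolding add_divide_distrib[symmetric] distrib_left[symmetric] D_def[symmetric]
    by (simp add: power2_eq_square)
  ultimately show ?thesis
    unfolding D_def q_def by (simp add: mult.assoc)
qed

lemma calL_ge:
  assumes "j \<in> {1..k}" "i \<in> I j" "finite (I j)" "0 < p 0" "p 0 < 1" "0 \<le> p j"
    "\<alpha> j \<le> 1" "0 \<le> L"
  shows "2 / p 0 * (\<alpha> j * \<gamma> i) \<le> calL k I \<alpha> \<gamma> p L"
    and "2 * (1 - \<alpha> j) * \<gamma> i / (p 0 + 2 * (1 - p 0) * p j) \<le> calL k I \<alpha> \<gamma> p L"
    and "L / ((1 - p 0) * (1 - p j)) \<le> calL k I \<alpha> \<gamma> p L"
proof -
  have "\<alpha> j * \<gamma> i \<le> Max ((\<lambda>i. \<alpha> j * \<gamma> i) ` I j)"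
    using assms(2,3) by (intro Max_ge) auto
  also have "\<dots> \<le> Max ((\<lambda>j. Max ((\<lambda>i. \<alpha> j * \<gamma> i) ` I j)) ` {1..k})"
    using assms(1) by (intro Max_ge) auto
  finally have "2 / p 0 * (\<alpha> j * \<gamma> i) \<le> 2 / p 0 * Max ((\<lambda>j. Max ((\<lambda>i. \<alpha> j * \<gamma> i) ` I j)) ` {1..k})"
    using assms(4) by (intro mult_left_mono) auto
  then show "2 / p 0 * (\<alpha> j * \<gamma> i) \<le> calL k I \<alpha> \<gamma> p L"
    unfolding calL_def by linarith
  have "2 * (1 - \<alpha> j) * \<gamma> i / (p 0 + 2 * (1 - p 0) * p j)
      \<le> 2 * (1 - \<alpha> j) * Max (\<gamma> ` I j) / (p 0 + 2 * (1 - p 0) * p j)"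
    using assms by (intro divide_right_mono mult_left_mono Max_ge) auto
  also have "\<dots> \<le> Max ((\<lambda>j. 2 * (1 - \<alpha> j) * Max (\<gamma> ` I j) / (p 0 + 2 * (1 - p 0) * p j)) ` {1..k})"
    using assms(1) by (intro Max_ge) auto
  finally show "2 * (1 - \<alpha> j) * \<gamma> i / (p 0 + 2 * (1 - p 0) * p j) \<le> calL k I \<alpha> \<gamma> p L"
    unfolding calL_def by linarith
  have "L / (1 - p 0) * (1 / (1 - p j)) \<le> L / (1 - p 0) * Max ((\<lambda>j. 1 / (1 - p j)) ` {1..k})"
    using assms by (intro mult_left_mono Max_ge) auto
  then show "L / ((1 - p 0) * (1 - p j)) \<le> calL k I \<alpha> \<gamma> p L"
    unfolding calL_def by simp
qed

lemma expectation_Gorc_diff_le: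
  fixes g :: "nat \<Rightarrow> 'a::real_normed_vector \<Rightarrow> 'a" and \<Theta> \<Theta>' :: "nat \<Rightarrow> 'a"
  assumes cluster: "j \<in> {1..k}" "i \<in> I j" "finite (I j)"
    and p: "0 < p 0" "p 0 < 1" "0 < p j" "p j < 1"
    and alpha: "0 \<le> \<alpha> j" "\<alpha> j \<le> 1" and gamma: "0 \<le> \<gamma> i" and L: "0 < L"
    and tau: "\<tau> j = p 0 / (p 0 + 2 * (1 - p 0) * p j)"
  defines "\<Delta> \<equiv> \<lambda>i. \<Theta> i - \<Theta>' i"
  shows "measure_pmf.expectation (xi_pmf k p)
      (\<lambda>\<xi>. (norm (Gorc k I \<alpha> \<gamma> \<tau> p g \<xi> \<Theta> j i - Gorc k I \<alpha> \<gamma> \<tau> p g \<xi> \<Theta>' j i))\<^sup>2)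
    \<le> 2 * calL k I \<alpha> \<gamma> p L * ((norm (g i (\<Theta> i) - g i (\<Theta>' i)))\<^sup>2 / (2 * L)
      + (1 - \<alpha> j) * \<gamma> i / 2 * (norm (\<Delta> i - clbar \<gamma> (I j) \<Delta>))\<^sup>2
      + \<alpha> j * \<gamma> i / 2 * (norm (\<Delta> i - glbar k I \<alpha> \<gamma> \<Delta>))\<^sup>2)"
proof -
  define X where "X = (norm (\<Delta> i - glbar k I \<alpha> \<gamma> \<Delta>))\<^sup>2"
  define Y where "Y = (norm (\<Delta> i - clbar \<gamma> (I j) \<Delta>))\<^sup>2"
  define Z where "Z = (norm (g i (\<Theta> i) - g i (\<Theta>' i)))\<^sup>2"
  define c1 c2 c3 c4
    where "c1 = \<gamma> i * \<alpha> j / p 0" and "c2 = \<gamma> i * \<tau> j * (1 - \<alpha> j) / p 0"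
      and "c3 = \<gamma> i * (1 - \<tau> j) * (1 - \<alpha> j) / ((1 - p 0) * p j)"
      and "c4 = 1 / ((1 - p 0) * (1 - p j))"
  define cL where "cL = calL k I \<alpha> \<gamma> p L"
  have "measure_pmf.expectation (xi_pmf k p)
      (\<lambda>\<xi>. (norm (Gorc k I \<alpha> \<gamma> \<tau> p g \<xi> \<Theta> j i - Gorc k I \<alpha> \<gamma> \<tau> p g \<xi> \<Theta>' j i))\<^sup>2)
      = p 0 * (norm (c1 *\<^sub>R (\<Delta> i - glbar k I \<alpha> \<gamma> \<Delta>) + c2 *\<^sub>R (\<Delta> i - clbar \<gamma> (I j) \<Delta>)))\<^sup>2
        + (1 - p 0) * (p j * c3\<^sup>2 * Y + (1 - p j) * c4\<^sup>2 * Z)"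
    unfolding c1_def c2_def c3_def c4_def Y_def Z_def \<Delta>_def
    using cluster(1) p by (intro expectation_Gorc_diff) auto
  also have "\<dots> \<le> p 0 * (2 * c1\<^sup>2 * X + 2 * c2\<^sup>2 * Y) + (1 - p 0) * (p j * c3\<^sup>2 * Y + (1 - p j) * c4\<^sup>2 * Z)"
    using power2_norm_add_le[of "c1 *\<^sub>R (\<Delta> i - glbar k I \<alpha> \<gamma> \<Delta>)" "c2 *\<^sub>R (\<Delta> i - clbar \<gamma> (I j) \<Delta>)"] p
    unfolding X_def Y_def by (simp add: power_mult_distrib)
  also have "\<dots> = p 0 * (2 * c1\<^sup>2 * X) + (p 0 * (2 * c2\<^sup>2) + (1 - p 0) * (p j * c3\<^sup>2)) * Y
      + (1 - p 0) * (1 - p j) * c4\<^sup>2 * Z"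
    by (simp add: algebra_simps)
  also have "p 0 * (2 * c1\<^sup>2 * X) = 2 / p 0 * (\<alpha> j * \<gamma> i) * (\<alpha> j * \<gamma> i * X)"
    unfolding c1_def using p by (simp add: power2_eq_square field_simps)
  also have "p 0 * (2 * c2\<^sup>2) + (1 - p 0) * (p j * c3\<^sup>2)
      = 2 * (\<gamma> i * (1 - \<alpha> j))\<^sup>2 / (p 0 + 2 * (1 - p 0) * p j)"
    using cluster_average_weights[of "p 0" "p j" "\<gamma> i * (1 - \<alpha> j)"] p
    unfolding c2_def c3_def tau by (simp add: mult_ac)
  also have "2 * (\<gamma> i * (1 - \<alpha> j))\<^sup>2 / (p 0 + 2 * (1 - p 0) * p j) * Y
      = 2 * (1 - \<alpha> j) * \<gamma> i / (p 0 + 2 * (1 - p 0) * p j) * ((1 - \<alpha> j) * \<gamma> i * Y)"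
    by (simp add: power2_eq_square)
  also have "(1 - p 0) * (1 - p j) * c4\<^sup>2 * Z = L / ((1 - p 0) * (1 - p j)) * (Z / L)"
    unfolding c4_def using p L by (simp add: power2_eq_square)
  also have "2 / p 0 * (\<alpha> j * \<gamma> i) * (\<alpha> j * \<gamma> i * X)
      + 2 * (1 - \<alpha> j) * \<gamma> i / (p 0 + 2 * (1 - p 0) * p j) * ((1 - \<alpha> j) * \<gamma> i * Y)
      + L / ((1 - p 0) * (1 - p j)) * (Z / L)
      \<le> cL * (\<alpha> j * \<gamma> i * X) + cL * ((1 - \<alpha> j) * \<gamma> i * Y) + cL * (Z / L)"
    unfolding cL_def
    using calL_ge[where I = I and p = p and \<alpha> = \<alpha> and L = L,
        OF cluster p(1,2) less_imp_le[OF p(3)] alpha(2) less_imp_le[OF L]] alpha gamma L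
    by (intro add_mono mult_right_mono) (auto simp: X_def Y_def Z_def)
  also have "\<dots> = 2 * cL * (Z / (2 * L) + (1 - \<alpha> j) * \<gamma> i / 2 * Y + \<alpha> j * \<gamma> i / 2 * X)"
    using L by (simp add: field_simps)
  finally show ?thesis
    unfolding cL_def X_def Y_def Z_def .
qed

lemma expectation_Gorc_diff_le_Bregman:
  fixes f :: "nat \<Rightarrow> 'a::real_inner \<Rightarrow> real" and g :: "nat \<Rightarrow> 'a \<Rightarrow> 'a" and \<Theta> \<Theta>' :: "nat \<Rightarrow> 'a"
  assumes cluster: "j \<in> {1..k}" "i \<in> I j" "finite (I j)"
    and p: "0 < p 0" "p 0 < 1" "0 < p j" "p j < 1"
    and alpha: "0 \<le> \<alpha> j" "\<alpha> j \<le> 1" and gamma: "0 \<le> \<gamma> i" and L: "0 < L"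
    and tau: "\<tau> j = p 0 / (p 0 + 2 * (1 - p 0) * p j)"
    and deriv: "\<And>x. (f i has_derivative (\<lambda>h. g i x \<bullet> h)) (at x)"
    and convex: "convex_on UNIV (f i)" and smooth: "L_smooth L (g i)"
  defines "\<Delta> \<equiv> \<lambda>i. \<Theta> i - \<Theta>' i"
  shows "measure_pmf.expectation (xi_pmf k p)
      (\<lambda>\<xi>. (norm (Gorc k I \<alpha> \<gamma> \<tau> p g \<xi> \<Theta> j i - Gorc k I \<alpha> \<gamma> \<tau> p g \<xi> \<Theta>' j i))\<^sup>2)
    \<le> 2 * calL k I \<alpha> \<gamma> p L * (f i (\<Theta> i) - f i (\<Theta>' i) - g i (\<Theta>' i) \<bullet> \<Delta> i
      + (1 - \<alpha> j) * \<gamma> i / 2 * (norm (\<Delta> i - clbar \<gamma> (I j) \<Delta>))\<^sup>2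
      + \<alpha> j * \<gamma> i / 2 * (norm (\<Delta> i - glbar k I \<alpha> \<gamma> \<Delta>))\<^sup>2)"
proof -
  have "measure_pmf.expectation (xi_pmf k p)
      (\<lambda>\<xi>. (norm (Gorc k I \<alpha> \<gamma> \<tau> p g \<xi> \<Theta> j i - Gorc k I \<alpha> \<gamma> \<tau> p g \<xi> \<Theta>' j i))\<^sup>2)
    \<le> 2 * calL k I \<alpha> \<gamma> p L * ((norm (g i (\<Theta> i) - g i (\<Theta>' i)))\<^sup>2 / (2 * L)
      + (1 - \<alpha> j) * \<gamma> i / 2 * (norm (\<Delta> i - clbar \<gamma> (I j) \<Delta>))\<^sup>2
      + \<alpha> j * \<gamma> i / 2 * (norm (\<Delta> i - glbar k I \<alpha> \<gamma> \<Delta>))\<^sup>2)"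
    unfolding \<Delta>_def using cluster p alpha gamma L tau by (rule expectation_Gorc_diff_le)
  also have "\<dots> \<le> 2 * calL k I \<alpha> \<gamma> p L * (f i (\<Theta> i) - f i (\<Theta>' i) - g i (\<Theta>' i) \<bullet> \<Delta> i
      + (1 - \<alpha> j) * \<gamma> i / 2 * (norm (\<Delta> i - clbar \<gamma> (I j) \<Delta>))\<^sup>2
      + \<alpha> j * \<gamma> i / 2 * (norm (\<Delta> i - glbar k I \<alpha> \<gamma> \<Delta>))\<^sup>2)"
  proof (intro mult_left_mono add_right_mono)
    show "(norm (g i (\<Theta> i) - g i (\<Theta>' i)))\<^sup>2 / (2 * L)
        \<le> f i (\<Theta> i) - f i (\<Theta>' i) - g i (\<Theta>' i) \<bullet> \<Delta> i"
      using convex_L_smooth_gradient_inequality[OF deriv convex smooth L, of "\<Theta>' i" "\<Theta> i"]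
      unfolding \<Delta>_def by simp
    have "0 < L / ((1 - p 0) * (1 - p j))"
      using L p by simp
    also have "\<dots> \<le> calL k I \<alpha> \<gamma> p L"
      using cluster p(1,2) less_imp_le[OF p(3)] alpha(2) less_imp_le[OF L] by (rule calL_ge(3))
    finally show "0 \<le> 2 * calL k I \<alpha> \<gamma> p L"
      by simp
  qed
  finally show ?thesis .
qed

theorem mainTheorem6:
  fixes n k :: nat
    and I :: "nat \<Rightarrow> nat set"
    and f :: "nat \<Rightarrow> 'a::euclidean_space \<Rightarrow> real"
    and g :: "nat \<Rightarrow> 'a \<Rightarrow> 'a"
    and \<mu> L :: real
    and \<gamma> \<alpha> p \<tau> :: "nat \<Rightarrow> real"
    and \<Theta>hat \<Theta> :: "nat \<Rightarrow> 'a"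
  assumes clusters_nonempty: "\<forall>j\<in>{1..k}. I j \<noteq> {}"
    and clusters_sub: "\<forall>j\<in>{1..k}. I j \<subseteq> {1..n}"
    and clusters_disj: "\<forall>j\<in>{1..k}. \<forall>j'\<in>{1..k}. j \<noteq> j' \<longrightarrow> I j \<inter> I j' = {}"
    and clusters_cover: "(\<Union>j\<in>{1..k}. I j) = {1..n}"
    and mu_pos: "0 < \<mu>" and mu_le_L: "\<mu> \<le> L"
    and grad: "\<forall>i\<in>{1..n}. \<forall>x. (f i has_derivative (\<lambda>h. g i x \<bullet> h)) (at x)"
    and sconv: "\<forall>i\<in>{1..n}. strongly_convex \<mu> (f i)"
    and smooth: "\<forall>i\<in>{1..n}. L_smooth L (g i)"
    and gamma_pos: "\<forall>i\<in>{1..n}. 0 < \<gamma> i"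
    and alpha_range: "\<forall>j\<in>{1..k}. 0 \<le> \<alpha> j \<and> \<alpha> j \<le> 1"
    and alpha_nz: "\<exists>j\<in>{1..k}. \<alpha> j \<noteq> 0"
    and minimizer: "\<forall>\<Theta>'. Fobj k I \<alpha> \<gamma> f \<Theta>hat \<le> Fobj k I \<alpha> \<gamma> f \<Theta>'"
    and p0: "0 < p 0 \<and> p 0 < 1"
    and pj: "\<forall>j\<in>{1..k}. 0 < p j \<and> p j < 1"
    and tau: "\<forall>j\<in>{1..k}. \<tau> j = p 0 / (p 0 + 2 * (1 - p 0) * p j)"
  shows "measure_pmf.expectation (xi_pmf k p)
           (\<lambda>\<xi>. \<Sum>j\<in>{1..k}. \<Sum>i\<in>I j.
              (norm (Gorc k I \<alpha> \<gamma> \<tau> p g \<xi> \<Theta> j i - Gorc k I \<alpha> \<gamma> \<tau> p g \<xi> \<Theta>hat j i))\<^sup>2)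
         \<le> 2 * calL k I \<alpha> \<gamma> p L * (Fobj k I \<alpha> \<gamma> f \<Theta> - Fobj k I \<alpha> \<gamma> f \<Theta>hat)"
proof -
  \<comment> \<open>Of the partition hypotheses only \<open>I j \<subseteq> {1..n}\<close> is needed.\<close>
  have L: "0 < L"
    using mu_pos mu_le_L by linarith
  have client: "i \<in> {1..n}" "finite (I j)" if "j \<in> {1..k}" "i \<in> I j" for j i
    using clusters_sub that finite_subset by blast+
  have convex: "convex_on UNIV (f i)" if "i \<in> {1..n}" for i
    using strongly_convex_imp_convex_on[of \<mu> "f i"] sconv mu_pos that by simp
  have "measure_pmf.expectation (xi_pmf k p)
           (\<lambda>\<xi>. \<Sum>j\<in>{1..k}. \<Sum>i\<in>I j.
              (norm (Gorc k I \<alpha> \<gamma> \<tau> p g \<xi> \<Theta> j i - Gorc k I \<alpha> \<gamma> \<tau> p g \<xi> \<Theta>hat j i))\<^sup>2)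
      = (\<Sum>j\<in>{1..k}. \<Sum>i\<in>I j. measure_pmf.expectation (xi_pmf k p)
           (\<lambda>\<xi>. (norm (Gorc k I \<alpha> \<gamma> \<tau> p g \<xi> \<Theta> j i - Gorc k I \<alpha> \<gamma> \<tau> p g \<xi> \<Theta>hat j i))\<^sup>2))"
    by (simp add: integrable_measure_pmf_finite[OF finite_set_pmf_xi_pmf] Bochner_Integration.integral_sum)
  also have "\<dots> \<le> (\<Sum>j\<in>{1..k}. \<Sum>i\<in>I j. 2 * calL k I \<alpha> \<gamma> p L *
      (f i (\<Theta> i) - f i (\<Theta>hat i) - g i (\<Theta>hat i) \<bullet> (\<Theta> i - \<Theta>hat i)
       + (1 - \<alpha> j) * \<gamma> i / 2 * (norm (\<Theta> i - \<Theta>hat i - clbar \<gamma> (I j) (\<lambda>i. \<Theta> i - \<Theta>hat i)))\<^sup>2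
       + \<alpha> j * \<gamma> i / 2 * (norm (\<Theta> i - \<Theta>hat i - glbar k I \<alpha> \<gamma> (\<lambda>i. \<Theta> i - \<Theta>hat i)))\<^sup>2))"
    by (intro sum_mono, rule expectation_Gorc_diff_le_Bregman)
      (use p0 pj alpha_range gamma_pos tau grad convex smooth L client in \<open>auto simp: less_imp_le\<close>)
  also have "\<dots> = 2 * calL k I \<alpha> \<gamma> p L * (Fobj k I \<alpha> \<gamma> f \<Theta> - Fobj k I \<alpha> \<gamma> f \<Theta>hat)"
    using grad client(1)
    by (subst Fobj_diff_minimizer[OF _ minimizer]) (auto simp: sum_distrib_left)
  finally show ?thesis .
qed

end
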